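(* Let $G$ be an almost Abelian Lie group with Lie algebra $\mathfrak g=\mathbb{R}\xi\ltimes_AV$, where $V$ is an Abelian ideal of codimension one and $[\xi,X]=AX$ for $X\in V$, with $A\in\mathfrak{gl}(V)$, $A\neq0$. Equip $G$ with a left-invariant Riemannian metric for which $\xi$ is a unit vector orthogonal to $V$, and write $A=A^{sy}+A^{sk}$ with $A^{sy}$ symmetric and $A^{sk}$ skew-symmetric with respect to the inner product on $V$. If $G$ is not flat, then its $0$-nullity distribution is the left-invariant distribution determined by the subspace $\ker A^{sy}\cap (A^{sk})^{-1}(\ker A^{sy})$ of $V$, where $(A^{sk})^{-1}(\ker A^{sy})=\{X\in V: A^{sk}X\in\ker A^{sy}\}$.
   Context: Curvature convention: $R(X,Y)Z=\nabla_X\nabla_YZ-\nabla_Y\nabla_XZ-\nabla_{[X,Y]}Z$. The $0$-nullity distribution is $\mathcal N_0|_p=\{z\in T_pM: R_p(x,y)z=0\ \forall x,y\in T_pM\}$. An almost Abelian Lie group is a non-Abelian connected real Lie group whose Lie algebra has a codimension one Abelian ideal. *)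

theory Defs
  imports "HOL-Analysis.Analysis"
begin

text \<open>A left-invariant metric on a Lie group is encoded by
  its Lie algebra g (a Euclidean space, inner product = metric at the identity) with
  bracket br. The Levi-Civita connection on left-invariant fields is given by the
  Koszul formula, and curvature / nullity of left-invariant fields at the identity
  determine the left-invariant tensor and distribution.\<close>

definition lc_conn :: "('g::euclidean_space \<Rightarrow> 'g \<Rightarrow> 'g) \<Rightarrow> 'g \<Rightarrow> 'g \<Rightarrow> 'g" where
  "lc_conn br x y =
     (\<Sum>b\<in>Basis. ((br x y \<bullet> b - br y b \<bullet> x + br b x \<bullet> y) / 2) *\<^sub>R b)"

definition curv :: "('g::euclidean_space \<Rightarrow> 'g \<Rightarrow> 'g) \<Rightarrow> 'g \<Rightarrow> 'g \<Rightarrow> 'g \<Rightarrow> 'g" where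
  "curv br x y z = lc_conn br x (lc_conn br y z) - lc_conn br y (lc_conn br x z)
                   - lc_conn br (br x y) z"

definition nullity0 :: "('g::euclidean_space \<Rightarrow> 'g \<Rightarrow> 'g) \<Rightarrow> 'g set" where
  "nullity0 br = {z. \<forall>x y. curv br x y z = 0}"

definition flat :: "('g::euclidean_space \<Rightarrow> 'g \<Rightarrow> 'g) \<Rightarrow> bool" where
  "flat br \<longleftrightarrow> (\<forall>x y z. curv br x y z = 0)"

text \<open>Almost Abelian Lie algebra R xi \<ltimes>_A V, realised on real \<times> V with xi = (1,0);
  the product inner product makes xi a unit vector orthogonal to V = {0} \<times> V.\<close>

definition aa_bracket :: "('v::euclidean_space \<Rightarrow> 'v) \<Rightarrow> real \<times> 'v \<Rightarrow> real \<times> 'v \<Rightarrow> real \<times> 'v" where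
  "aa_bracket A p q = (0, fst p *\<^sub>R A (snd q) - fst q *\<^sub>R A (snd p))"

definition sym_part :: "('v::euclidean_space \<Rightarrow> 'v) \<Rightarrow> 'v \<Rightarrow> 'v" where
  "sym_part A x = (1/2) *\<^sub>R (A x + adjoint A x)"

definition skew_part :: "('v::euclidean_space \<Rightarrow> 'v) \<Rightarrow> 'v \<Rightarrow> 'v" where
  "skew_part A x = (1/2) *\<^sub>R (A x - adjoint A x)"

end

theory Submission
  imports Defs
begin

(* With S and K the symmetric and skew parts of A, the Koszul formula gives
  \<nabla>_(a,X) (b,Y) = (\<langle>SX,Y\<rangle>, aKY - bSX), so the curvature is
  expressed through S and M = S\<^sup>2 + SK - KS, the operator Y \<mapsto> R(\<xi>,Y)\<xi>.
  A vector (c,Z) lies in the nullity iff MZ = 0, cM = 0 and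
  \<langle>SX,Z\<rangle>SY = \<langle>SY,Z\<rangle>SX for all X, Y.
  If M = 0 then tr S\<^sup>2 = tr [K,S] = 0, so S = 0, which is flatness; hence c = 0.
  Taking X = Z shows that \<langle>SZ,Z\<rangle>S = SZ \<otimes> SZ; pairing MZ = 0 with Z and with SZ then
  yields |SZ|\<^sup>2 + 2t = 0 and |SZ|\<^sup>2(|SZ|\<^sup>2 + t) = 0 for t = \<langle>KZ,SZ\<rangle>, so SZ = 0,
  and then MZ = SKZ. *)

lemma linear_sym_part: "linear A \<Longrightarrow> linear (sym_part A)"
  unfolding sym_part_def
  by (intro linear_compose_scale_right linear_compose_add adjoint_linear)

lemma linear_skew_part: "linear A \<Longrightarrow> linear (skew_part A)"
  unfolding skew_part_def
  by (intro linear_compose_scale_right linear_compose_sub adjoint_linear)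

lemma inner_sym_part: "linear A \<Longrightarrow> sym_part A x \<bullet> y = x \<bullet> sym_part A y"
  unfolding sym_part_def
  by (simp add: adjoint_clauses inner_add_left inner_add_right inner_commute)

lemma inner_skew_part: "linear A \<Longrightarrow> skew_part A x \<bullet> y = - (x \<bullet> skew_part A y)"
  unfolding skew_part_def
  by (simp add: adjoint_clauses inner_diff_left inner_diff_right inner_commute field_simps)

lemma sym_part_add_skew_part: "sym_part A x + skew_part A x = A x"
  unfolding sym_part_def skew_part_def by (simp flip: scaleR_add_right)

lemma lc_conn_eqI:
  assumes "\<And>u. (br x y \<bullet> u - br y u \<bullet> x + br u x \<bullet> y) / 2 = v \<bullet> u"
  shows "lc_conn br x y = v"
  unfolding lc_conn_def assms by (rule euclidean_representation)

lemma lc_conn_aa_bracket: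
  assumes "linear A"
  shows "lc_conn (aa_bracket A) (a, X) (b, Y) =
    (sym_part A X \<bullet> Y, a *\<^sub>R skew_part A Y - b *\<^sub>R sym_part A X)"
proof (rule lc_conn_eqI)
  fix u :: "real \<times> 'a"
  obtain c Z where u: "u = (c, Z)" by (cases u)
  note S = inner_sym_part[OF assms] and K = inner_skew_part[OF assms]
  have S': "p \<bullet> sym_part A q = q \<bullet> sym_part A p" for p q
    by (metis S inner_commute)
  have K': "p \<bullet> skew_part A q = - (q \<bullet> skew_part A p)" for p q
    by (metis K inner_commute)
  show "(aa_bracket A (a, X) (b, Y) \<bullet> u - aa_bracket A (b, Y) u \<bullet> (a, X)
      + aa_bracket A u (a, X) \<bullet> (b, Y)) / 2 =
    (sym_part A X \<bullet> Y, a *\<^sub>R skew_part A Y - b *\<^sub>R sym_part A X) \<bullet> u"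
    unfolding u aa_bracket_def
    by (simp add: inner_prod_def flip: sym_part_add_skew_part[of A])
      (simp add: S K S'[of Z X] S'[of Y X] S'[of Z Y] K'[of Z X] K'[of Y X] K'[of Z Y] algebra_simps)
qed

(* R(\<xi>, Y) \<xi> = (0, xi_curv_op A Y) for \<xi> = (1, 0) *)

definition xi_curv_op :: "('v::euclidean_space \<Rightarrow> 'v) \<Rightarrow> 'v \<Rightarrow> 'v" where
  "xi_curv_op A v = sym_part A (sym_part A v) + sym_part A (skew_part A v) - skew_part A (sym_part A v)"

lemma curv_aa_bracket:
  assumes "linear A"
  shows "curv (aa_bracket A) (a, X) (b, Y) (c, Z) =
    (b * (xi_curv_op A X \<bullet> Z) - a * (xi_curv_op A Y \<bullet> Z),
     (c * a) *\<^sub>R xi_curv_op A Y - (c * b) *\<^sub>R xi_curv_op A X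
       + (sym_part A X \<bullet> Z) *\<^sub>R sym_part A Y - (sym_part A Y \<bullet> Z) *\<^sub>R sym_part A X)"
proof -
  have br: "aa_bracket A (a, X) (b, Y) = (0, a *\<^sub>R A Y - b *\<^sub>R A X)"
    by (simp add: aa_bracket_def)
  have SK: "sym_part A p \<bullet> skew_part A q = - (skew_part A (sym_part A p) \<bullet> q)" for p q
    by (simp add: inner_skew_part[OF assms])
  note S = linear_add[OF linear_sym_part[OF assms]] linear_diff[OF linear_sym_part[OF assms]]
    linear_scale[OF linear_sym_part[OF assms]]
  note K = linear_add[OF linear_skew_part[OF assms]] linear_diff[OF linear_skew_part[OF assms]]
    linear_scale[OF linear_skew_part[OF assms]]
  show ?thesis
    unfolding curv_def br lc_conn_aa_bracket[OF assms]
    by (simp add: S K xi_curv_op_def SK inner_commute[of "sym_part A Y" "sym_part A X"] algebra_simps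
        flip: sym_part_add_skew_part[of A])
qed

lemma inner_xi_curv_op:
  assumes "linear A"
  shows "xi_curv_op A x \<bullet> y = x \<bullet> xi_curv_op A y"
proof -
  note S = inner_sym_part[OF assms] and K = inner_skew_part[OF assms]
  show ?thesis unfolding xi_curv_op_def
    by (simp add: inner_add_left inner_add_right inner_diff_left inner_diff_right S K)
qed

lemma sum_Basis_inner_sym_skew_eq_0:
  fixes S K :: "'a::euclidean_space \<Rightarrow> 'a"
  assumes S: "\<And>p q. S p \<bullet> q = p \<bullet> S q" and K: "\<And>p q. K p \<bullet> q = - (p \<bullet> K q)"
  shows "(\<Sum>b\<in>Basis. S b \<bullet> K b) = 0"
proof -
  have entry: "(S b \<bullet> c) * (K b \<bullet> c) = - ((S c \<bullet> b) * (K c \<bullet> b))" for b c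
    by (metis S K inner_commute mult_minus_right)
  have "(\<Sum>b\<in>Basis. S b \<bullet> K b) = (\<Sum>b\<in>Basis. \<Sum>c\<in>Basis. (S b \<bullet> c) * (K b \<bullet> c))"
    by (subst euclidean_inner) simp
  also have "\<dots> = (\<Sum>c\<in>Basis. \<Sum>b\<in>Basis. - ((S c \<bullet> b) * (K c \<bullet> b)))"
    by (subst sum.swap) (intro sum.cong refl entry)
  also have "\<dots> = - (\<Sum>b\<in>Basis. S b \<bullet> K b)"
    by (subst (2) euclidean_inner) (simp add: sum_negf)
  finally show ?thesis
    by simp
qed

lemma sym_part_eq_0_if_xi_curv_op_eq_0:
  assumes "linear A" and "\<And>v. xi_curv_op A v = 0"
  shows "sym_part A = (\<lambda>v. 0)"
proof -
  let ?S = "sym_part A" and ?K = "skew_part A"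
  note S = inner_sym_part[OF assms(1)] and K = inner_skew_part[OF assms(1)]
  have SS: "?S (?S v) = ?K (?S v) - ?S (?K v)" for v
    using assms(2)[of v] unfolding xi_curv_op_def by (simp add: algebra_simps)
  have square: "?S b \<bullet> ?S b = - 2 * (?S b \<bullet> ?K b)" for b
  proof -
    have "?S b \<bullet> ?S b = b \<bullet> ?K (?S b) - b \<bullet> ?S (?K b)"
      by (simp add: S[of b] SS inner_diff_right)
    also have "\<dots> = - 2 * (?S b \<bullet> ?K b)"
      using K[of b "?S b"] S[of b "?K b"] by (simp add: inner_commute)
    finally show ?thesis .
  qed
  have "(\<Sum>b\<in>Basis. ?S b \<bullet> ?S b) = - 2 * (\<Sum>b\<in>Basis. ?S b \<bullet> ?K b)"
    by (simp add: square sum_distrib_left)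
  also have "\<dots> = 0"
    using sum_Basis_inner_sym_skew_eq_0[of ?S ?K] S K by simp
  finally have "?S b = 0" if "b \<in> Basis" for b
    using that sum_nonneg_eq_0_iff[of Basis "\<lambda>b. ?S b \<bullet> ?S b"] by simp
  then show ?thesis
    by (intro linear_eq_stdbasis linear_sym_part assms(1) linear_zero)
qed

lemma xi_curv_op_eq_if_sym_part_eq_0:
  "linear A \<Longrightarrow> sym_part A Z = 0 \<Longrightarrow> xi_curv_op A Z = sym_part A (skew_part A Z)"
  by (simp add: xi_curv_op_def linear_0 linear_sym_part linear_skew_part)

lemma mem_nullity0_aa_bracket_iff:
  assumes "linear A"
  shows "(c, Z) \<in> nullity0 (aa_bracket A) \<longleftrightarrow>
    xi_curv_op A Z = 0 \<and> (c \<noteq> 0 \<longrightarrow> (\<forall>Y. xi_curv_op A Y = 0)) \<and>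
    (\<forall>X Y. (sym_part A X \<bullet> Z) *\<^sub>R sym_part A Y = (sym_part A Y \<bullet> Z) *\<^sub>R sym_part A X)"
  (is "_ \<longleftrightarrow> ?jacobi \<and> ?scaled \<and> ?rank")
proof
  assume "(c, Z) \<in> nullity0 (aa_bracket A)"
  then have R: "curv (aa_bracket A) x y (c, Z) = 0" for x y
    unfolding nullity0_def by blast
  have "X \<bullet> xi_curv_op A Z = 0" for X
    using R[of "(0, X)" "(1, 0)"]
    by (simp add: curv_aa_bracket[OF assms] inner_xi_curv_op[OF assms] zero_prod_def)
  then have ?jacobi
    by (metis inner_eq_zero_iff)
  moreover have ?scaled
    using R[of "(1, 0)" "(0, Y)" for Y]
    by (auto simp: curv_aa_bracket[OF assms] zero_prod_def linear_0[OF linear_sym_part[OF assms]])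
  moreover have ?rank
    using R[of "(0, X)" "(0, Y)" for X Y] by (simp add: curv_aa_bracket[OF assms] zero_prod_def)
  ultimately show "?jacobi \<and> ?scaled \<and> ?rank"
    by blast
next
  assume "?jacobi \<and> ?scaled \<and> ?rank"
  then have "curv (aa_bracket A) (a, X) (b, Y) (c, Z) = 0" for a b X Y
    by (auto simp: curv_aa_bracket[OF assms] inner_xi_curv_op[OF assms] zero_prod_def)
  then show "(c, Z) \<in> nullity0 (aa_bracket A)"
    by (auto simp: nullity0_def)
qed

lemma flat_aa_bracket_iff:
  assumes "linear A"
  shows "flat (aa_bracket A) \<longleftrightarrow> sym_part A = (\<lambda>v. 0)"
proof -
  have "flat (aa_bracket A) \<longleftrightarrow> (\<forall>c Z. (c, Z) \<in> nullity0 (aa_bracket A))"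
    by (auto simp: flat_def nullity0_def)
  also have "\<dots> \<longleftrightarrow> sym_part A = (\<lambda>v. 0)"
  proof
    assume "\<forall>c Z. (c, Z) \<in> nullity0 (aa_bracket A)"
    then have "xi_curv_op A Y = 0" for Y
      using mem_nullity0_aa_bracket_iff[OF assms, of 1] by auto
    then show "sym_part A = (\<lambda>v. 0)"
      by (rule sym_part_eq_0_if_xi_curv_op_eq_0[OF assms])
  next
    assume S: "sym_part A = (\<lambda>v. 0)"
    then have "xi_curv_op A Y = 0" for Y
      using xi_curv_op_eq_if_sym_part_eq_0[OF assms] by simp
    with S show "\<forall>c Z. (c, Z) \<in> nullity0 (aa_bracket A)"
      by (simp add: mem_nullity0_aa_bracket_iff[OF assms])
  qed
  finally show ?thesis .
qed

lemma sym_part_eq_0_if_nullity_conditions: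
  assumes "linear A" and jacobi: "xi_curv_op A Z = 0"
    and rank: "\<And>X Y. (sym_part A X \<bullet> Z) *\<^sub>R sym_part A Y = (sym_part A Y \<bullet> Z) *\<^sub>R sym_part A X"
  shows "sym_part A Z = 0"
proof -
  let ?S = "sym_part A" and ?K = "skew_part A"
  note S = inner_sym_part[OF assms(1)] and K = inner_skew_part[OF assms(1)]
  define w where "w = ?S Z"
  define t where "t = ?K Z \<bullet> w"
  have jacobi_w: "?S w + ?S (?K Z) - ?K w = 0"
    using jacobi unfolding xi_curv_op_def w_def .
  have rank_w: "(w \<bullet> Z) *\<^sub>R ?S Y = (Y \<bullet> w) *\<^sub>R w" for Y
    using rank[of Z Y] by (simp add: w_def S)
  have "(?S w + ?S (?K Z) - ?K w) \<bullet> Z = w \<bullet> w + 2 * t"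
    using S[of w Z] S[of "?K Z" Z] K[of w Z]
    by (simp add: inner_add_left inner_diff_left inner_add_right inner_diff_right t_def w_def inner_commute)
  then have ww: "w \<bullet> w = - 2 * t"
    by (simp add: jacobi_w)
  have "(w \<bullet> Z) * (?S w \<bullet> w) = (w \<bullet> w) * (w \<bullet> w)"
    using arg_cong[OF rank_w[of w], of "\<lambda>v. v \<bullet> w"] by simp
  moreover have "(w \<bullet> Z) * (?S (?K Z) \<bullet> w) = t * (w \<bullet> w)"
    using arg_cong[OF rank_w[of "?K Z"], of "\<lambda>v. v \<bullet> w"] by (simp add: t_def inner_commute)
  moreover have "?K w \<bullet> w = 0"
    using K[of w w] by (simp add: inner_commute)
  ultimately have "(w \<bullet> w) * (w \<bullet> w + t) = 0"
    using arg_cong[OF jacobi_w, of "\<lambda>v. (w \<bullet> Z) * (v \<bullet> w)"]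
    by (simp add: algebra_simps)
  then have "t = 0"
    by (simp add: ww)
  then show ?thesis
    using ww by (simp add: w_def)
qed

lemma mem_nullity0_aa_bracket_0_iff:
  assumes "linear A"
  shows "(0, Z) \<in> nullity0 (aa_bracket A) \<longleftrightarrow>
    sym_part A Z = 0 \<and> sym_part A (skew_part A Z) = 0"
proof
  assume "(0, Z) \<in> nullity0 (aa_bracket A)"
  then have jacobi: "xi_curv_op A Z = 0"
    and rank: "(sym_part A X \<bullet> Z) *\<^sub>R sym_part A Y = (sym_part A Y \<bullet> Z) *\<^sub>R sym_part A X"
    for X Y
    by (simp_all add: mem_nullity0_aa_bracket_iff[OF assms])
  have SZ: "sym_part A Z = 0"
    using sym_part_eq_0_if_nullity_conditions[OF assms jacobi rank] .
  with jacobi show "sym_part A Z = 0 \<and> sym_part A (skew_part A Z) = 0"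
    by (simp add: xi_curv_op_eq_if_sym_part_eq_0[OF assms])
next
  assume "sym_part A Z = 0 \<and> sym_part A (skew_part A Z) = 0"
  then show "(0, Z) \<in> nullity0 (aa_bracket A)"
    by (simp add: mem_nullity0_aa_bracket_iff[OF assms] xi_curv_op_eq_if_sym_part_eq_0[OF assms]
        inner_sym_part[OF assms])
qed

lemma fst_mem_nullity0_aa_bracket:
  assumes "linear A" and "\<not> flat (aa_bracket A)" and "z \<in> nullity0 (aa_bracket A)"
  shows "fst z = 0"
proof (rule ccontr)
  assume "fst z \<noteq> 0"
  with assms(3) have "xi_curv_op A Y = 0" for Y
    using mem_nullity0_aa_bracket_iff[OF assms(1), of "fst z" "snd z"] by simp
  then have "sym_part A = (\<lambda>v. 0)"
    by (rule sym_part_eq_0_if_xi_curv_op_eq_0[OF assms(1)])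
  with assms(2) show False
    by (simp add: flat_aa_bracket_iff[OF assms(1)])
qed

theorem lemma4p1:
  fixes A :: "'v::euclidean_space \<Rightarrow> 'v"
  assumes "linear A"
    and "A \<noteq> (\<lambda>x. 0)"
    and "\<not> flat (aa_bracket A)"
  shows "nullity0 (aa_bracket A) =
    {(0, X) | X. sym_part A X = 0 \<and> sym_part A (skew_part A X) = 0}"
proof (intro set_eqI)
  fix z :: "real \<times> 'v"
  obtain c Z where z: "z = (c, Z)"
    by (cases z)
  show "z \<in> nullity0 (aa_bracket A) \<longleftrightarrow>
      z \<in> {(0, X) | X. sym_part A X = 0 \<and> sym_part A (skew_part A X) = 0}"
    using fst_mem_nullity0_aa_bracket[OF assms(1,3), of z]
    by (auto simp: z mem_nullity0_aa_bracket_0_iff[OF assms(1)])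
qed

end
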